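(* The average mid-height of the symmetric Dyck paths of length $2n$ (i.e. from $(0,0)$ to $(2n,0)$) equals $$\frac{2^{2m}-\binom{2m}{m}}{\binom{2m}{m}}\ \text{ if } n=2m,\qquad \frac{2^{2m+1}-\binom{2m+1}{m}}{\binom{2m+1}{m}}\ \text{ if } n=2m+1,$$ and in both cases it is asymptotic to $\sqrt{\pi m}$ as $m\to\infty$.
   Context: A Dyck path of length $2n$ is a lattice path from $(0,0)$ to $(2n,0)$ with steps $U=(1,1)$, $D=(1,-1)$ never going below the $x$-axis. It is symmetric if it is invariant under reflection in the line $x=n$ (its $i$-th step is $U$ iff its $(2n+1-i)$-th step is $D$). Its mid-height is the $y$-coordinate of its vertex with $x$-coordinate $n$. The average is taken uniformly over all symmetric Dyck paths of length $2n$. *)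

theory Defs
  imports Complex_Main "HOL-Library.Landau_Symbols"
begin

text \<open>A path is a list of steps; True = U = (1,1), False = D = (1,-1).\<close>

definition height :: "bool list \<Rightarrow> int" where
  "height ys = int (length (filter (\<lambda>s. s) ys)) - int (length (filter (\<lambda>s. \<not> s) ys))"

definition dyck_path :: "nat \<Rightarrow> bool list \<Rightarrow> bool" where
  "dyck_path n xs \<longleftrightarrow> length xs = 2 * n \<and> (\<forall>k \<le> 2 * n. height (take k xs) \<ge> 0) \<and> height xs = 0"

text \<open>Symmetric: the i-th step (1-based) is U iff the (2n+1-i)-th step is D;
  0-based: xs!i is U iff xs!(2n-1-i) is D.\<close>
definition symmetric_path :: "nat \<Rightarrow> bool list \<Rightarrow> bool" where
  "symmetric_path n xs \<longleftrightarrow> (\<forall>i < 2 * n. xs ! i = (\<not> xs ! (2 * n - 1 - i)))"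

definition sym_dyck_paths :: "nat \<Rightarrow> bool list set" where
  "sym_dyck_paths n = {xs. dyck_path n xs \<and> symmetric_path n xs}"

definition mid_height :: "nat \<Rightarrow> bool list \<Rightarrow> int" where
  "mid_height n xs = height (take n xs)"

definition avg_mid_height :: "nat \<Rightarrow> real" where
  "avg_mid_height n = (\<Sum>xs\<in>sym_dyck_paths n. real_of_int (mid_height n xs)) / real (card (sym_dyck_paths n))"

end

theory Submission
  imports Defs "HOL-Analysis.Analysis" "HOL-Real_Asymp.Real_Asymp"
begin

text \<open>Reflecting the first half of a symmetric Dyck path in the line \<open>x = n\<close> recovers the whole
  path, so symmetric Dyck paths of length \<open>2n\<close> correspond to paths of length \<open>n\<close> that never go
  below the axis, and the mid-height is the final height of such a path.  Appending a step to
  these paths gives the recurrence \<open>S(n+1) + N(n+1) = 2 (S(n) + N(n))\<close> for the total final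
  height \<open>S\<close> and the number \<open>N\<close> of paths, whence \<open>S(n) = 2^n - N(n)\<close>; by the ballot theorem
  \<open>N(n)\<close> is the central binomial coefficient.  Since \<open>2 binom(2m+1,m) = binom(2m+2,m+1)\<close>, the
  average for \<open>2m+1\<close> equals the one for \<open>2m+2\<close>, and the asymptotics follow from
  \<open>binom(2m,m) ~ 4^m / sqrt(pi m)\<close>, which is the behaviour of \<open>-1/2 gchoose m\<close> at infinity.\<close>

lemma height_Nil [simp]: "height [] = 0"
  by (simp add: height_def)

lemma height_append [simp]: "height (xs @ ys) = height xs + height ys"
  by (simp add: height_def)

lemma height_Cons: "height (b # xs) = height xs + (if b then 1 else -1)"
  by (simp add: height_def)

lemma height_snoc: "height (xs @ [b]) = height xs + (if b then 1 else -1)"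
  by (simp add: height_def)

lemma height_single [simp]: "height [b] = (if b then 1 else -1)"
  by (simp add: height_def)

lemma height_map_Not [simp]: "height (map Not xs) = - height xs"
  by (induction xs) (auto simp: height_Cons)

lemma height_rev [simp]: "height (rev xs) = height xs"
  by (simp add: height_def rev_filter [symmetric])

lemma height_eq_length_minus_downs:
  "height xs = int (length xs) - 2 * int (length (filter Not xs))"
  using sum_length_filter_compl [of "\<lambda>s. s" xs] by (simp add: height_def)

lemma inj_snoc: "inj (\<lambda>xs. xs @ [b])"
  by (auto intro: injI)

subsection \<open>Paths that never go below the axis\<close>

definition nonneg_paths :: "nat \<Rightarrow> bool list set" where
  "nonneg_paths n = {xs. length xs = n \<and> (\<forall>k\<le>n. height (take k xs) \<ge> 0)}"

lemma finite_nonneg_paths: "finite (nonneg_paths n)"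
proof (rule finite_subset)
  show "nonneg_paths n \<subseteq> {xs. set xs \<subseteq> UNIV \<and> length xs = n}"
    by (auto simp: nonneg_paths_def)
  show "finite {xs. set xs \<subseteq> (UNIV :: bool set) \<and> length xs = n}"
    by (rule finite_lists_length_eq) simp
qed

lemma nonneg_paths_height_nonneg: "xs \<in> nonneg_paths n \<Longrightarrow> height xs \<ge> 0"
  by (auto simp: nonneg_paths_def dest: spec [of _ n])

lemma nonneg_paths_0: "nonneg_paths 0 = {[]}"
  by (auto simp: nonneg_paths_def)

lemma nonneg_paths_Suc:
  "nonneg_paths (Suc n) = (\<lambda>xs. xs @ [True]) ` nonneg_paths n
     \<union> (\<lambda>xs. xs @ [False]) ` {xs \<in> nonneg_paths n. height xs > 0}"
proof (intro equalityI subsetI)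
  fix ys assume ys: "ys \<in> nonneg_paths (Suc n)"
  then have len: "length ys = Suc n" by (simp add: nonneg_paths_def)
  then obtain xs b where ys_eq: "ys = xs @ [b]"
    by (metis append_butlast_last_id length_0_conv nat.distinct(1))
  with len have "length xs = n" by simp
  moreover have "height (take k xs) \<ge> 0" if "k \<le> n" for k
  proof -
    have "take k xs = take k ys" using ys_eq that \<open>length xs = n\<close> by simp
    with ys that show ?thesis by (simp add: nonneg_paths_def)
  qed
  ultimately have xs: "xs \<in> nonneg_paths n" by (simp add: nonneg_paths_def)
  have "height ys \<ge> 0"
    using ys len by (auto simp: nonneg_paths_def dest: spec [of _ "Suc n"])
  with xs ys_eq show "ys \<in> (\<lambda>xs. xs @ [True]) ` nonneg_paths n
      \<union> (\<lambda>xs. xs @ [False]) ` {xs \<in> nonneg_paths n. height xs > 0}"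
    by (cases b) (auto simp: height_snoc)
next
  fix ys assume "ys \<in> (\<lambda>xs. xs @ [True]) ` nonneg_paths n
      \<union> (\<lambda>xs. xs @ [False]) ` {xs \<in> nonneg_paths n. height xs > 0}"
  then obtain xs b where ys_eq: "ys = xs @ [b]" and xs: "xs \<in> nonneg_paths n"
    and down: "\<not> b \<longrightarrow> height xs > 0"
    by auto
  have len: "length xs = n" using xs by (simp add: nonneg_paths_def)
  have "height (take k ys) \<ge> 0" if "k \<le> Suc n" for k
  proof (cases "k \<le> n")
    case True
    with xs ys_eq len show ?thesis by (auto simp: nonneg_paths_def)
  next
    case False
    with that have "take k ys = ys" using ys_eq len by simp
    with ys_eq down nonneg_paths_height_nonneg [OF xs] show ?thesis
      by (auto simp: height_snoc)
  qed
  with ys_eq len show "ys \<in> nonneg_paths (Suc n)" by (simp add: nonneg_paths_def)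
qed

lemma sum_height_nonneg_paths_Suc:
  "(\<Sum>xs\<in>nonneg_paths (Suc n). height xs) =
     (\<Sum>xs\<in>nonneg_paths n. height xs + 1) + (\<Sum>xs\<in>{xs \<in> nonneg_paths n. height xs > 0}. height xs - 1)"
  unfolding nonneg_paths_Suc
  by (subst sum.union_disjoint)
     (auto simp: finite_nonneg_paths sum.reindex inj_on_subset [OF inj_snoc] algebra_simps)

lemma card_nonneg_paths_Suc:
  "card (nonneg_paths (Suc n)) = card (nonneg_paths n) + card {xs \<in> nonneg_paths n. height xs > 0}"
  unfolding nonneg_paths_Suc
  by (subst card_Un_disjoint)
     (auto simp: finite_nonneg_paths card_image inj_on_subset [OF inj_snoc])

theorem sum_height_nonneg_paths:
  "(\<Sum>xs\<in>nonneg_paths n. height xs) = 2 ^ n - int (card (nonneg_paths n))"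
proof (induction n)
  case 0
  show ?case by (simp add: nonneg_paths_0)
next
  case (Suc n)
  let ?P = "nonneg_paths n" and ?Q = "{xs \<in> nonneg_paths n. height xs > 0}"
  text \<open>Paths of height \<open>0\<close> contribute nothing to the total height, so dropping them is harmless.\<close>
  have sum_Q: "(\<Sum>xs\<in>?Q. height xs) = (\<Sum>xs\<in>?P. height xs)"
  proof -
    have "(\<Sum>xs\<in>?Q. height xs) = (\<Sum>xs\<in>?P. if height xs > 0 then height xs else 0)"
      by (rule sum.inter_filter [OF finite_nonneg_paths])
    also have "\<dots> = (\<Sum>xs\<in>?P. height xs)"
      by (rule sum.cong) (use nonneg_paths_height_nonneg in \<open>auto simp: less_le\<close>)
    finally show ?thesis .
  qed
  have "(\<Sum>xs\<in>nonneg_paths (Suc n). height xs)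
      = 2 * (\<Sum>xs\<in>?P. height xs) + int (card ?P) - int (card ?Q)"
    unfolding sum_height_nonneg_paths_Suc by (simp add: sum.distrib sum_subtractf sum_Q)
  with Suc.IH show ?case by (simp add: card_nonneg_paths_Suc)
qed

subsection \<open>The ballot theorem\<close>

definition nonneg_paths_downs :: "nat \<Rightarrow> nat \<Rightarrow> bool list set" where
  "nonneg_paths_downs n k = {xs \<in> nonneg_paths n. length (filter Not xs) = k}"

lemma finite_nonneg_paths_downs: "finite (nonneg_paths_downs n k)"
  using finite_nonneg_paths by (simp add: nonneg_paths_downs_def)

lemma nonneg_paths_downs_empty: "n < 2 * k \<Longrightarrow> nonneg_paths_downs n k = {}"
  using nonneg_paths_height_nonneg height_eq_length_minus_downs
  by (fastforce simp: nonneg_paths_downs_def nonneg_paths_def)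

lemma nonneg_paths_downs_Suc:
  "nonneg_paths_downs (Suc n) k = (\<lambda>xs. xs @ [True]) ` nonneg_paths_downs n k \<union>
     (\<lambda>xs. xs @ [False]) ` (if 0 < k \<and> 2 * k \<le> n + 1 then nonneg_paths_downs n (k - 1) else {})"
proof -
  have "nonneg_paths_downs (Suc n) k = (\<lambda>xs. xs @ [True]) ` nonneg_paths_downs n k \<union>
      (\<lambda>xs. xs @ [False]) ` {xs \<in> nonneg_paths n. height xs > 0 \<and> Suc (length (filter Not xs)) = k}"
    unfolding nonneg_paths_downs_def nonneg_paths_Suc by auto
  also have "{xs \<in> nonneg_paths n. height xs > 0 \<and> Suc (length (filter Not xs)) = k} =
      (if 0 < k \<and> 2 * k \<le> n + 1 then nonneg_paths_downs n (k - 1) else {})"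
    by (auto simp: nonneg_paths_downs_def nonneg_paths_def height_eq_length_minus_downs)
  finally show ?thesis .
qed

lemma card_nonneg_paths_downs_Suc:
  "card (nonneg_paths_downs (Suc n) k) = card (nonneg_paths_downs n k) +
     (if 0 < k \<and> 2 * k \<le> n + 1 then card (nonneg_paths_downs n (k - 1)) else 0)"
  unfolding nonneg_paths_downs_Suc
  by (subst card_Un_disjoint)
     (auto simp: finite_nonneg_paths_downs card_image inj_on_subset [OF inj_snoc])

text \<open>In subtraction-free form: the count is \<open>binom(n,k) - binom(n,k-1)\<close>, with \<open>binom(n,-1) = 0\<close>.\<close>

theorem ballot:
  assumes "2 * k \<le> n + 1"
  shows "card (nonneg_paths_downs n k) + (if 0 < k then n choose (k - 1) else 0) = n choose k"
  using assms
proof (induction n arbitrary: k)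
  case 0
  then have "k = 0" by simp
  moreover have "nonneg_paths_downs 0 0 = {[]}"
    by (auto simp: nonneg_paths_downs_def nonneg_paths_0)
  ultimately show ?case by simp
next
  case (Suc n)
  show ?case
  proof (cases "2 * k = n + 2")
    case True
    then have "card (nonneg_paths_downs (Suc n) k) = 0"
      unfolding card_nonneg_paths_downs_Suc using nonneg_paths_downs_empty [of n k] by simp
    moreover have "Suc n choose k = Suc n choose (Suc n - k)"
      using True by (intro binomial_symmetric) simp
    moreover have "Suc n - k = k - 1" "k > 0" using True by simp_all
    ultimately show ?thesis by simp
  next
    case False
    with Suc.prems have k: "2 * k \<le> n + 1" by simp
    show ?thesis
    proof (cases k)
      case 0
      then show ?thesis using Suc.IH [of 0] by (simp add: card_nonneg_paths_downs_Suc)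
    next
      case (Suc j)
      have "card (nonneg_paths_downs n k) + (n choose j) = n choose k"
        using Suc.IH [OF k] Suc by simp
      moreover have "card (nonneg_paths_downs n j) + (if 0 < j then n choose (j - 1) else 0) = n choose j"
        using Suc.IH [of j] k Suc by simp
      moreover have "Suc n choose j = (if 0 < j then n choose (j - 1) else 0) + (n choose j)"
        by (cases j) simp_all
      ultimately show ?thesis
        unfolding card_nonneg_paths_downs_Suc using k Suc by simp
    qed
  qed
qed

lemma sum_card_nonneg_paths_downs:
  "2 * K \<le> n + 1 \<Longrightarrow> (\<Sum>k\<le>K. card (nonneg_paths_downs n k)) = n choose K"
proof (induction K)
  case 0
  then show ?case using ballot [of 0 n] by simp
next
  case (Suc K)
  then show ?case using ballot [of "Suc K" n] by simp
qed

theorem card_nonneg_paths: "card (nonneg_paths n) = n choose (n div 2)"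
proof -
  have "(\<lambda>xs. length (filter Not xs)) ` nonneg_paths n \<subseteq> {..n div 2}"
    using nonneg_paths_height_nonneg height_eq_length_minus_downs
    by (fastforce simp: nonneg_paths_def)
  then have "card (nonneg_paths n) = (\<Sum>k\<le>n div 2. card (nonneg_paths_downs n k))"
    using sum.group [OF finite_nonneg_paths finite_atMost,
        where g = "\<lambda>xs. length (filter Not xs)" and h = "\<lambda>_. 1 :: nat"]
    by (simp add: nonneg_paths_downs_def)
  also have "\<dots> = n choose (n div 2)"
    by (rule sum_card_nonneg_paths_downs) simp
  finally show ?thesis .
qed

subsection \<open>Symmetric Dyck paths and their first halves\<close>

definition symmetric_completion :: "bool list \<Rightarrow> bool list" where
  "symmetric_completion xs = xs @ map Not (rev xs)"

lemma symmetric_path_drop: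
  assumes "symmetric_path n ys" "length ys = 2 * n"
  shows "drop n ys = map Not (rev (take n ys))"
proof (rule nth_equalityI)
  show "length (drop n ys) = length (map Not (rev (take n ys)))"
    using assms(2) by simp
next
  fix j assume "j < length (drop n ys)"
  then have j: "j < n" using assms(2) by simp
  then have "n + j < 2 * n" by simp
  then have "ys ! (n + j) = (\<not> ys ! (2 * n - 1 - (n + j)))"
    using assms(1) unfolding symmetric_path_def by blast
  moreover have "2 * n - 1 - (n + j) = n - Suc j" using j by simp
  ultimately show "drop n ys ! j = map Not (rev (take n ys)) ! j"
    using j assms(2) by (simp add: rev_nth)
qed

lemma symmetric_path_symmetric_completion:
  assumes "length xs = n"
  shows "symmetric_path n (symmetric_completion xs)"
  unfolding symmetric_path_def
proof (intro allI impI)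
  fix i assume i: "i < 2 * n"
  show "symmetric_completion xs ! i = (\<not> symmetric_completion xs ! (2 * n - 1 - i))"
  proof (cases "i < n")
    case True
    then have "\<not> 2 * n - 1 - i < n" "2 * n - 1 - i - n = n - Suc i"
      "n - Suc (n - Suc i) = i" "n - Suc i < n" by auto
    with True assms show ?thesis by (simp add: symmetric_completion_def nth_append rev_nth)
  next
    case False
    with i have "2 * n - Suc i < n" "n + n - Suc i = 2 * n - Suc i" by auto
    with False i assms show ?thesis by (simp add: symmetric_completion_def nth_append rev_nth)
  qed
qed

lemma symmetric_completion_prefix_height:
  assumes "length xs = n" "n \<le> k" "k \<le> 2 * n"
  shows "height (take k (symmetric_completion xs)) = height (take (2 * n - k) xs)"
proof -
  have "take k (symmetric_completion xs) = xs @ map Not (rev (drop (2 * n - k) xs))"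
    using assms by (simp add: symmetric_completion_def take_map take_rev mult_2)
  then have "height (take k (symmetric_completion xs)) = height xs - height (drop (2 * n - k) xs)"
    by simp
  also have "\<dots> = height (take (2 * n - k) xs)"
    by (metis append_take_drop_id add_diff_cancel_right' height_append)
  finally show ?thesis .
qed

lemma symmetric_completion_in_sym_dyck_paths:
  assumes xs: "xs \<in> nonneg_paths n"
  shows "symmetric_completion xs \<in> sym_dyck_paths n"
proof -
  have len: "length xs = n" using xs by (simp add: nonneg_paths_def)
  have "height (take k (symmetric_completion xs)) \<ge> 0" if "k \<le> 2 * n" for k
  proof (cases "k \<le> n")
    case True
    with xs len show ?thesis by (simp add: symmetric_completion_def nonneg_paths_def)
  next
    case False
    with xs that show ?thesis
      by (simp add: symmetric_completion_prefix_height len nonneg_paths_def)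
  qed
  with len symmetric_path_symmetric_completion [OF len] show ?thesis
    by (simp add: sym_dyck_paths_def dyck_path_def symmetric_completion_def)
qed

lemma bij_betw_take_sym_dyck_paths: "bij_betw (take n) (sym_dyck_paths n) (nonneg_paths n)"
proof (rule bij_betw_byWitness [where f' = symmetric_completion])
  show "\<forall>ys\<in>sym_dyck_paths n. symmetric_completion (take n ys) = ys"
  proof
    fix ys assume "ys \<in> sym_dyck_paths n"
    then have "symmetric_path n ys" "length ys = 2 * n"
      by (auto simp: sym_dyck_paths_def dyck_path_def)
    from symmetric_path_drop [OF this] show "symmetric_completion (take n ys) = ys"
      unfolding symmetric_completion_def by (metis append_take_drop_id)
  qed
  show "\<forall>xs\<in>nonneg_paths n. take n (symmetric_completion xs) = xs"
    by (auto simp: symmetric_completion_def nonneg_paths_def)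
  show "take n ` sym_dyck_paths n \<subseteq> nonneg_paths n"
    by (auto simp: sym_dyck_paths_def dyck_path_def nonneg_paths_def min_def)
  show "symmetric_completion ` nonneg_paths n \<subseteq> sym_dyck_paths n"
    using symmetric_completion_in_sym_dyck_paths by blast
qed

theorem avg_mid_height_eq:
  "avg_mid_height n = (2 ^ n - real (n choose (n div 2))) / real (n choose (n div 2))"
proof -
  have "(\<Sum>ys\<in>sym_dyck_paths n. real_of_int (mid_height n ys))
      = (\<Sum>xs\<in>nonneg_paths n. real_of_int (height xs))"
    unfolding mid_height_def by (rule sum.reindex_bij_betw [OF bij_betw_take_sym_dyck_paths])
  also have "\<dots> = 2 ^ n - real (n choose (n div 2))"
    using arg_cong [OF sum_height_nonneg_paths [of n], of real_of_int]
    by (simp add: card_nonneg_paths)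
  finally show ?thesis
    unfolding avg_mid_height_def bij_betw_same_card [OF bij_betw_take_sym_dyck_paths]
      card_nonneg_paths by simp
qed

subsection \<open>Asymptotics of the central binomial coefficient\<close>

lemma gbinomial_minus_one_half:
  "((-1/2 :: real) gchoose n) = (-1/4) ^ n * real ((2 * n) choose n)"
proof -
  have "real ((2 * n) choose n) = fact (2 * n) / (fact n * fact n)"
    by (simp add: binomial_fact)
  also have "\<dots> = 4 ^ n * pochhammer (1/2) n / fact n"
    by (simp add: fact_double power_mult)
  finally have "real ((2 * n) choose n) = 4 ^ n * pochhammer (1/2) n / fact n" .
  then show ?thesis
    by (simp add: gbinomial_pochhammer power_divide power_minus')
qed

lemma central_binomial_asymp_equiv:
  "(\<lambda>n. real ((2 * n) choose n)) \<sim>[at_top] (\<lambda>n. 4 ^ n / sqrt (pi * real n))"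
proof (rule asymp_equivI')
  have "(\<lambda>n. ((-1/2 :: real) gchoose n) / ((-1) ^ n / exp ((-1/2 + 1) * ln (real n))))
      \<longlonglongrightarrow> inverse (Gamma (1/2))"
    using gbinomial_asymptotic [of "-1/2 :: real"] by simp
  then have "(\<lambda>n. sqrt pi * (((-1/2 :: real) gchoose n) / ((-1) ^ n / exp ((-1/2 + 1) * ln (real n)))))
      \<longlonglongrightarrow> sqrt pi * inverse (sqrt pi)"
    unfolding Gamma_one_half_real by (rule tendsto_mult_left)
  then have "(\<lambda>n. sqrt pi * (((-1/2 :: real) gchoose n) / ((-1) ^ n / exp ((-1/2 + 1) * ln (real n)))))
      \<longlonglongrightarrow> 1"
    by simp
  then show "(\<lambda>n. real ((2 * n) choose n) / (4 ^ n / sqrt (pi * real n))) \<longlonglongrightarrow> 1"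
  proof (rule Lim_transform_eventually)
    show "\<forall>\<^sub>F n in sequentially.
        sqrt pi * (((-1/2 :: real) gchoose n) / ((-1) ^ n / exp ((-1/2 + 1) * ln (real n))))
        = real ((2 * n) choose n) / (4 ^ n / sqrt (pi * real n))"
      using eventually_gt_at_top [of "0::nat"]
    proof eventually_elim
      case (elim n)
      then have "exp ((-1/2 + 1) * ln (real n)) = sqrt (real n)"
        by (simp add: powr_half_sqrt [symmetric] powr_def)
      moreover have "(-1/4 :: real) ^ n / (-1) ^ n = 1 / 4 ^ n"
        by (simp add: power_divide [symmetric] power_one_over)
      ultimately show ?case
        unfolding gbinomial_minus_one_half by (simp add: real_sqrt_mult field_simps)
    qed
  qed
qed

lemma central_binomial_ratio_asymp_equiv:
  "(\<lambda>n. (2 ^ (2 * n) - real ((2 * n) choose n)) / real ((2 * n) choose n))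
     \<sim>[at_top] (\<lambda>n. sqrt (pi * real n))"
proof -
  have "(\<lambda>n. 4 ^ n / real ((2 * n) choose n)) \<sim>[at_top] (\<lambda>n. 4 ^ n / (4 ^ n / sqrt (pi * real n)))"
    by (intro asymp_equiv_intros central_binomial_asymp_equiv)
  also have "(\<lambda>n. 4 ^ n / (4 ^ n / sqrt (pi * real n))) = (\<lambda>n. sqrt (pi * real n))"
    by simp
  finally have "(\<lambda>n. 4 ^ n / real ((2 * n) choose n)) \<sim>[at_top] (\<lambda>n. sqrt (pi * real n))" .
  moreover have "(\<lambda>_. -1 :: real) \<in> o(\<lambda>n. sqrt (pi * real n))"
    by real_asymp
  ultimately have "(\<lambda>n. 4 ^ n / real ((2 * n) choose n) - 1) \<sim>[at_top] (\<lambda>n. sqrt (pi * real n))"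
    using asymp_equiv_add_right [of "\<lambda>_. -1" at_top "\<lambda>n. sqrt (pi * real n)"] by simp
  moreover have "4 ^ n / real ((2 * n) choose n) - 1
      = (2 ^ (2 * n) - real ((2 * n) choose n)) / real ((2 * n) choose n)" for n
    by (simp add: diff_divide_distrib power_mult)
  ultimately show ?thesis by simp
qed

lemma central_binomial_Suc: "(2 * Suc m) choose Suc m = 2 * ((2 * m + 1) choose m)"
proof -
  have "(2 * m + 1) choose Suc m = (2 * m + 1) choose m"
    by (subst binomial_symmetric) simp_all
  then show ?thesis by simp
qed

lemma avg_mid_height_odd: "avg_mid_height (2 * m + 1) = avg_mid_height (2 * Suc m)"
proof -
  have "(2 * m + 1) div 2 = m" "2 * Suc m div 2 = Suc m" by simp_all
  moreover have "real ((2 * m + 1) choose m) > 0" by simp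
  ultimately show ?thesis
    unfolding avg_mid_height_eq
    by (simp only: central_binomial_Suc) (simp add: field_simps power_mult del: binomial_Suc_Suc)
qed

theorem corollary4p4:
  shows "(\<forall>m::nat. avg_mid_height (2 * m) =
            (2 ^ (2 * m) - real ((2 * m) choose m)) / real ((2 * m) choose m))
       \<and> (\<forall>m::nat. avg_mid_height (2 * m + 1) =
            (2 ^ (2 * m + 1) - real ((2 * m + 1) choose m)) / real ((2 * m + 1) choose m))
       \<and> (\<lambda>m::nat. avg_mid_height (2 * m)) \<sim>[at_top] (\<lambda>m. sqrt (pi * real m))
       \<and> (\<lambda>m::nat. avg_mid_height (2 * m + 1)) \<sim>[at_top] (\<lambda>m. sqrt (pi * real m))"
proof (intro conjI allI)
  show even: "avg_mid_height (2 * m) =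
      (2 ^ (2 * m) - real ((2 * m) choose m)) / real ((2 * m) choose m)" for m
    by (simp add: avg_mid_height_eq)
  show "avg_mid_height (2 * m + 1) =
      (2 ^ (2 * m + 1) - real ((2 * m + 1) choose m)) / real ((2 * m + 1) choose m)" for m
    by (simp add: avg_mid_height_eq)
  show even_asymp: "(\<lambda>m. avg_mid_height (2 * m)) \<sim>[at_top] (\<lambda>m. sqrt (pi * real m))"
    unfolding even by (rule central_binomial_ratio_asymp_equiv)
  have "(\<lambda>m. avg_mid_height (2 * Suc m)) \<sim>[at_top] (\<lambda>m. sqrt (pi * real (Suc m)))"
    using asymp_equiv_compose' [OF even_asymp filterlim_Suc] .
  also have "(\<lambda>m. sqrt (pi * real (Suc m))) \<sim>[at_top] (\<lambda>m. sqrt (pi * real m))"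
    by real_asymp
  finally show "(\<lambda>m. avg_mid_height (2 * m + 1)) \<sim>[at_top] (\<lambda>m. sqrt (pi * real m))"
    by (simp only: avg_mid_height_odd)
qed

end
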